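(* Let $A$ be a skew brace and endow $\mathrm{Spec}\,A$ with the spectral topology. Then the irreducible closed subsets of $\mathrm{Spec}\,A$ are precisely the sets $H(P)=\{Q\in\mathrm{Spec}\,A\mid P\subseteq Q\}$ with $P\in\mathrm{Spec}\,A$.
   Context: A (left) skew brace is a triple $(A,+,\circ)$ where $(A,+)$ and $(A,\circ)$ are groups such that $a\circ(b+c)=a\circ b-a+a\circ c$ for all $a,b,c\in A$; the common identity is $e$. Put $\lambda_a(b)=-a+a\circ b$ and $a*b=-a+a\circ b-b$. An ideal of $A$ is a normal subgroup $I$ of both $(A,+)$ and $(A,\circ)$ with $\lambda_a(I)\subseteq I$ for all $a\in A$. For subsets $I,J\subseteq A$, $I*J=\{i*j\mid i\in I,j\in J\}$. A prime ideal is a proper ideal $P$ such that for any subsets $I,J$ of $A$, $I*J\subseteq P$ implies $I\subseteq P$ or $J\subseteq P$; $\mathrm{Spec}\,A$ is the set of prime ideals. For an ideal $I$, $H(I)=\{P\in\mathrm{Spec}\,A\mid I\subseteq P\}$; the spectral topology on $\mathrm{Spec}\,A$ has as closed sets exactly the sets $H(I)$, $I$ an ideal. A closed subset $S$ is irreducible if it is not the union of two closed subsets $S_1,S_2\subsetneq S$. *)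

theory Defs
  imports "HOL-Algebra.Algebra"
begin

text \<open>A (left) skew brace on a common carrier: S is the additive group (A,+),
  M the multiplicative group (A,\<circ>).\<close>

definition skew_brace :: "'a monoid \<Rightarrow> 'a monoid \<Rightarrow> bool" where
  "skew_brace S M \<longleftrightarrow> group S \<and> group M \<and> carrier S = carrier M \<and>
     (\<forall>a\<in>carrier S. \<forall>b\<in>carrier S. \<forall>c\<in>carrier S.
        a \<otimes>\<^bsub>M\<^esub> (b \<otimes>\<^bsub>S\<^esub> c)
          = (a \<otimes>\<^bsub>M\<^esub> b) \<otimes>\<^bsub>S\<^esub> inv\<^bsub>S\<^esub> a \<otimes>\<^bsub>S\<^esub> (a \<otimes>\<^bsub>M\<^esub> c))"

definition brace_lambda :: "'a monoid \<Rightarrow> 'a monoid \<Rightarrow> 'a \<Rightarrow> 'a \<Rightarrow> 'a" where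
  "brace_lambda S M a b = inv\<^bsub>S\<^esub> a \<otimes>\<^bsub>S\<^esub> (a \<otimes>\<^bsub>M\<^esub> b)"

definition brace_star :: "'a monoid \<Rightarrow> 'a monoid \<Rightarrow> 'a \<Rightarrow> 'a \<Rightarrow> 'a" where
  "brace_star S M a b = inv\<^bsub>S\<^esub> a \<otimes>\<^bsub>S\<^esub> (a \<otimes>\<^bsub>M\<^esub> b) \<otimes>\<^bsub>S\<^esub> inv\<^bsub>S\<^esub> b"

definition brace_ideal :: "'a monoid \<Rightarrow> 'a monoid \<Rightarrow> 'a set \<Rightarrow> bool" where
  "brace_ideal S M I \<longleftrightarrow> normal I S \<and> normal I M \<and>
     (\<forall>a\<in>carrier S. \<forall>i\<in>I. brace_lambda S M a i \<in> I)"

definition set_star :: "'a monoid \<Rightarrow> 'a monoid \<Rightarrow> 'a set \<Rightarrow> 'a set \<Rightarrow> 'a set" where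
  "set_star S M I J = {brace_star S M i j | i j. i \<in> I \<and> j \<in> J}"

definition prime_ideal :: "'a monoid \<Rightarrow> 'a monoid \<Rightarrow> 'a set \<Rightarrow> bool" where
  "prime_ideal S M P \<longleftrightarrow> brace_ideal S M P \<and> P \<noteq> carrier S \<and>
     (\<forall>I J. I \<subseteq> carrier S \<longrightarrow> J \<subseteq> carrier S \<longrightarrow>
        set_star S M I J \<subseteq> P \<longrightarrow> I \<subseteq> P \<or> J \<subseteq> P)"

definition Spec :: "'a monoid \<Rightarrow> 'a monoid \<Rightarrow> 'a set set" where
  "Spec S M = {P. prime_ideal S M P}"

definition HH :: "'a monoid \<Rightarrow> 'a monoid \<Rightarrow> 'a set \<Rightarrow> 'a set set" where
  "HH S M I = {P \<in> Spec S M. I \<subseteq> P}"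

definition spec_closed :: "'a monoid \<Rightarrow> 'a monoid \<Rightarrow> 'a set set \<Rightarrow> bool" where
  "spec_closed S M Xs \<longleftrightarrow> (\<exists>K. brace_ideal S M K \<and> Xs = HH S M K)"

text \<open>Irreducible closed set (standard convention: nonempty).\<close>
definition spec_irreducible :: "'a monoid \<Rightarrow> 'a monoid \<Rightarrow> 'a set set \<Rightarrow> bool" where
  "spec_irreducible S M F \<longleftrightarrow> spec_closed S M F \<and> F \<noteq> {} \<and>
     \<not> (\<exists>F1 F2. spec_closed S M F1 \<and> spec_closed S M F2 \<and> F1 \<subset> F \<and> F2 \<subset> F \<and> F = F1 \<union> F2)"

end

theory Submission
  imports Defs
begin

text \<open>Every closed set \<open>F\<close> equals \<open>H(\<Inter>F)\<close>, and since ideals are closed under nonempty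
  intersections, \<open>{Q \<in> F. Y \<subseteq> Q}\<close> is again closed whenever it is nonempty. For irreducible
  \<open>F\<close> the ideal \<open>P = \<Inter>F\<close> is prime: if \<open>I * J \<subseteq> P\<close>, every \<open>Q \<in> F\<close> contains \<open>I\<close> or \<open>J\<close>,
  so \<open>F\<close> is the union of the closed sets \<open>{Q \<in> F. I \<subseteq> Q}\<close> and \<open>{Q \<in> F. J \<subseteq> Q}\<close>, one of
  which must be all of \<open>F\<close>. Conversely \<open>H(P)\<close> is irreducible because \<open>P\<close> is its generic
  point: any closed set containing \<open>P\<close> contains all of \<open>H(P)\<close>.\<close>

lemma (in group) normal_Inter:
  assumes "A \<noteq> {}" and "\<And>H. H \<in> A \<Longrightarrow> H \<lhd> G"
  shows "\<Inter>A \<lhd> G"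
proof -
  have "subgroup (\<Inter>A) G"
    by (rule subgroups_Inter) (use assms normal_imp_subgroup in auto)
  moreover have "\<forall>x \<in> carrier G. \<forall>h \<in> \<Inter>A. x \<otimes> h \<otimes> inv x \<in> \<Inter>A"
    using assms(2) normal_inv_iff by blast
  ultimately show ?thesis
    using normal_inv_iff by blast
qed

lemma brace_ideal_Inter:
  assumes "skew_brace S M" and "A \<noteq> {}" and "\<And>I. I \<in> A \<Longrightarrow> brace_ideal S M I"
  shows "brace_ideal S M (\<Inter>A)"
proof -
  have "group S" and "group M"
    using assms(1) unfolding skew_brace_def by auto
  then show ?thesis
    using assms(2,3) group.normal_Inter[of S A] group.normal_Inter[of M A]
    unfolding brace_ideal_def by blast
qed

lemma Spec_brace_ideal: "P \<in> Spec S M \<Longrightarrow> brace_ideal S M P"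
  unfolding Spec_def prime_ideal_def by auto

lemma Inter_Spec_neq_carrier:
  assumes "F \<subseteq> Spec S M" and "F \<noteq> {}"
  shows "\<Inter>F \<noteq> carrier S"
proof -
  obtain Q where Q: "Q \<in> F"
    using assms(2) by auto
  with assms(1) have Q_Spec: "Q \<in> Spec S M" by blast
  then have "Q \<noteq> carrier S"
    unfolding Spec_def prime_ideal_def by blast
  moreover have "Q \<subseteq> carrier S"
    using Spec_brace_ideal[OF Q_Spec] unfolding brace_ideal_def
    by (meson normal_imp_subgroup subgroup.subset)
  ultimately show ?thesis
    using Q by blast
qed

lemma HH_subset_Spec: "HH S M K \<subseteq> Spec S M"
  unfolding HH_def by auto

lemma HH_antimono: "K \<subseteq> L \<Longrightarrow> HH S M L \<subseteq> HH S M K"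
  unfolding HH_def by auto

lemma spec_closed_HH_Inter:
  assumes "skew_brace S M" and "G \<subseteq> Spec S M" and "G \<noteq> {}"
  shows "spec_closed S M (HH S M (\<Inter>G))"
proof -
  have "brace_ideal S M (\<Inter>G)"
    by (rule brace_ideal_Inter[OF assms(1,3)]) (use assms(2) Spec_brace_ideal in blast)
  then show ?thesis
    unfolding spec_closed_def by blast
qed

lemma spec_closed_eq_HH_Inter:
  assumes "spec_closed S M F"
  shows "F = HH S M (\<Inter>F)"
proof -
  obtain K where F: "F = HH S M K"
    using assms unfolding spec_closed_def by blast
  then have "K \<subseteq> \<Inter>F"
    unfolding HH_def by auto
  then have "HH S M (\<Inter>F) \<subseteq> F"
    using F HH_antimono by blast
  moreover have "F \<subseteq> HH S M (\<Inter>F)"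
    using F unfolding HH_def by auto
  ultimately show ?thesis by blast
qed

lemma spec_closed_restrict:
  assumes sb: "skew_brace S M" and closed: "spec_closed S M F"
    and ne: "{Q \<in> F. Y \<subseteq> Q} \<noteq> {}"
  shows "spec_closed S M {Q \<in> F. Y \<subseteq> Q}"
proof -
  let ?G = "{Q \<in> F. Y \<subseteq> Q}"
  have F: "F = HH S M (\<Inter>F)"
    using closed by (rule spec_closed_eq_HH_Inter)
  then have G_Spec: "?G \<subseteq> Spec S M"
    using HH_subset_Spec[of S M "\<Inter>F"] by blast
  have "HH S M (\<Inter>?G) = ?G"
  proof (rule subset_antisym)
    show "HH S M (\<Inter>?G) \<subseteq> ?G"
    proof
      fix Q
      assume Q: "Q \<in> HH S M (\<Inter>?G)"
      have "\<Inter>F \<subseteq> \<Inter>?G"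
        by (rule Inter_anti_mono) blast
      then have "Q \<in> F"
        using Q F HH_antimono by blast
      moreover have "Y \<subseteq> Q"
        using Q unfolding HH_def by blast
      ultimately show "Q \<in> ?G" by blast
    qed
    show "?G \<subseteq> HH S M (\<Inter>?G)"
      using G_Spec unfolding HH_def by blast
  qed
  then show ?thesis
    using spec_closed_HH_Inter[OF sb G_Spec ne] by simp
qed

lemma spec_irreducibleD:
  assumes "spec_irreducible S M F" and "spec_closed S M F1" and "spec_closed S M F2"
    and "F = F1 \<union> F2"
  shows "F1 = F \<or> F2 = F"
  using assms unfolding spec_irreducible_def by blast

lemma prime_ideal_Inter_irreducible:
  assumes sb: "skew_brace S M" and irr: "spec_irreducible S M F"
  shows "prime_ideal S M (\<Inter>F)"
  unfolding prime_ideal_def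
proof (intro conjI allI impI)
  have closed: "spec_closed S M F" and ne: "F \<noteq> {}"
    using irr unfolding spec_irreducible_def by auto
  have F_Spec: "F \<subseteq> Spec S M"
    using spec_closed_eq_HH_Inter[OF closed] HH_subset_Spec by blast
  show "brace_ideal S M (\<Inter>F)"
    using brace_ideal_Inter[OF sb ne] F_Spec Spec_brace_ideal by blast
  show "\<Inter>F \<noteq> carrier S"
    using F_Spec ne by (rule Inter_Spec_neq_carrier)
  fix I J
  assume I: "I \<subseteq> carrier S" and J: "J \<subseteq> carrier S" and IJ: "set_star S M I J \<subseteq> \<Inter>F"
  have "I \<subseteq> Q \<or> J \<subseteq> Q" if "Q \<in> F" for Q
  proof -
    have "prime_ideal S M Q"
      using that F_Spec unfolding Spec_def by blast
    moreover have "set_star S M I J \<subseteq> Q"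
      using IJ that by blast
    ultimately show ?thesis
      using I J unfolding prime_ideal_def by blast
  qed
  then have cover: "F = {Q \<in> F. I \<subseteq> Q} \<union> {Q \<in> F. J \<subseteq> Q}"
    by blast
  show "I \<subseteq> \<Inter>F \<or> J \<subseteq> \<Inter>F"
  proof (cases "{Q \<in> F. I \<subseteq> Q} = {} \<or> {Q \<in> F. J \<subseteq> Q} = {}")
    case True
    then show ?thesis
      using cover by blast
  next
    case False
    then have "spec_closed S M {Q \<in> F. I \<subseteq> Q}" and "spec_closed S M {Q \<in> F. J \<subseteq> Q}"
      by (simp_all add: spec_closed_restrict[OF sb closed])
    then have "{Q \<in> F. I \<subseteq> Q} = F \<or> {Q \<in> F. J \<subseteq> Q} = F"
      using spec_irreducibleD[OF irr _ _ cover] by blast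
    then show ?thesis by blast
  qed
qed

lemma spec_irreducible_HH_prime:
  assumes "P \<in> Spec S M"
  shows "spec_irreducible S M (HH S M P)"
proof -
  have P: "P \<in> HH S M P"
    using assms unfolding HH_def by auto
  have generic: "HH S M P \<subseteq> G" if "spec_closed S M G" and "P \<in> G" for G
  proof -
    have "\<Inter>G \<subseteq> P"
      using that(2) by (rule Inter_lower)
    then show ?thesis
      using HH_antimono spec_closed_eq_HH_Inter[OF that(1)] by blast
  qed
  have no_split: "\<not> (F1 \<subset> HH S M P \<and> F2 \<subset> HH S M P \<and> HH S M P = F1 \<union> F2)"
    if "spec_closed S M F1" and "spec_closed S M F2" for F1 F2
    using P generic[OF that(1)] generic[OF that(2)] by blast
  have "spec_closed S M (HH S M P)"
    using assms Spec_brace_ideal unfolding spec_closed_def by blast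
  with P no_split show ?thesis
    unfolding spec_irreducible_def by blast
qed

theorem lemma4p10:
  fixes S M :: "'a monoid"
  assumes "skew_brace S M"
  shows "spec_irreducible S M F \<longleftrightarrow> (\<exists>P\<in>Spec S M. F = HH S M P)"
proof
  assume irr: "spec_irreducible S M F"
  then have "spec_closed S M F"
    unfolding spec_irreducible_def by simp
  then have "F = HH S M (\<Inter>F)"
    by (rule spec_closed_eq_HH_Inter)
  moreover have "\<Inter>F \<in> Spec S M"
    using prime_ideal_Inter_irreducible[OF assms irr] unfolding Spec_def by simp
  ultimately show "\<exists>P\<in>Spec S M. F = HH S M P" by blast
next
  assume "\<exists>P\<in>Spec S M. F = HH S M P"
  then show "spec_irreducible S M F"
    using spec_irreducible_HH_prime by blast
qed

end
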